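(* Let $m=2k+1$ with $k$ a nonnegative integer and let $n\ge m-1$ be an integer. Let $M(u)=M(u^2+u^{2m})$, $u\in(0,+\infty)$, where $M(h)$ is the first order Melnikov function of $(1.1)_\epsilon$. Put $z=[n/2]m-\frac{m^2-5m+4}{2}$ and $q=[n/2]m-\frac{m^2-5m}{2}$. Then $M(u)$ is a linear combination of the following $\left[\frac{n-1}{2}\right]+\left[\frac n2\right]m-\frac14m^2+\frac32m+\frac34$ linearly independent functions: $$u^{2p+1}\ (0\le p\le z);\qquad u^{2q+2s+k(m-1)+1}\ (0\le s\le \tfrac{m-5}{2},\ 0\le k\le 2s+1);\qquad (u^2+u^{2m})^{l+1}\ (0\le l\le[(n-1)/2]),$$ (i.e. $u,u^3,\dots,u^{2z+1},u^{2q+1},u^{2q+m},u^{2q+3},u^{2q+m+2},u^{2q+2m+1},\dots,u^{2q+m^2-4m},u^2+u^{2m},\dots,(u^2+u^{2m})^{[(n-1)/2]+1}$), and the coefficients of this linear combination are independent, i.e. as the coefficients of $p^\pm,q^\pm$ range over all real values these coefficients take all real values.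
   Context: $[x]$ is the integer part. System $(1.1)_\epsilon$: $\dot x=y+\epsilon p^{+},\ \dot y=-x+\epsilon q^{+}$ for $y\ge x^{m}$, and $\dot x=y+\epsilon p^{-},\ \dot y=-x+\epsilon q^{-}$ for $y<x^{m}$, where $p^{\pm}=\sum_{i+j=0}^{n}a^{\pm}_{i,j}x^iy^j$, $q^{\pm}=\sum_{i+j=0}^{n}b^{\pm}_{i,j}x^iy^j$ are arbitrary real polynomials of degree $n$. For $h>0$, $u=u(h)>0$ solves $u^2+u^{2m}=h$; $L_h^{+}$ is the arc of $x^2+y^2=h$ in $\{y\ge x^m\}$ traversed clockwise from $(-u,(-u)^m)$ to $(u,u^m)$, and $L_h^-$ the arc in $\{y\le x^m\}$ traversed clockwise from $(u,u^m)$ to $(-u,(-u)^m)$. The first order Melnikov function is $M(h)=\int_{L_h^+}q^+dx-p^+dy+\int_{L_h^-}q^-dx-p^-dy$. *)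

theory Defs
  imports "HOL-Analysis.Analysis"
begin

definition poly2 :: "nat \<Rightarrow> (nat \<Rightarrow> nat \<Rightarrow> real) \<Rightarrow> real \<times> real \<Rightarrow> real" where
  "poly2 n a = (\<lambda>(x, y). \<Sum>i\<le>n. \<Sum>j\<le>n - i. a i j * x ^ i * y ^ j)"

definition line_integral ::
  "(real \<times> real \<Rightarrow> real) \<Rightarrow> (real \<times> real \<Rightarrow> real) \<Rightarrow> (real \<Rightarrow> real \<times> real) \<Rightarrow> real \<Rightarrow> real \<Rightarrow> real" where
  "line_integral P Q g a b =
     integral {a..b} (\<lambda>s. P (g s) * fst (vector_derivative g (at s))
                          + Q (g s) * snd (vector_derivative g (at s)))"

definition cw_arc :: "real \<Rightarrow> real \<Rightarrow> real \<Rightarrow> real \<times> real" where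
  "cw_arc r t0 s = (r * cos (t0 - s), r * sin (t0 - s))"

definition u_of :: "nat \<Rightarrow> real \<Rightarrow> real" where
  "u_of m h = (THE u. u > 0 \<and> u ^ 2 + u ^ (2 * m) = h)"

text \<open>The point (u,u^m) has polar angle
  alpha = arctan(u^m/u); since m is odd, (-u,(-u)^m) has polar angle alpha + pi.
  L+ is the clockwise half circle from angle alpha+pi to alpha, L- the clockwise
  half circle from angle alpha to alpha-pi.
  Arguments: ap = coefficients of p+, bp of q+, am of p-, bm of q-.\<close>
definition melnikov ::
  "nat \<Rightarrow> nat \<Rightarrow> (nat \<Rightarrow> nat \<Rightarrow> real) \<Rightarrow> (nat \<Rightarrow> nat \<Rightarrow> real)
     \<Rightarrow> (nat \<Rightarrow> nat \<Rightarrow> real) \<Rightarrow> (nat \<Rightarrow> nat \<Rightarrow> real) \<Rightarrow> real \<Rightarrow> real" where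
  "melnikov m n ap bp am bm h =
    (let u = u_of m h; r = sqrt h; \<alpha> = arctan (u ^ m / u) in
       line_integral (poly2 n bp) (\<lambda>z. - poly2 n ap z) (cw_arc r (\<alpha> + pi)) 0 pi
     + line_integral (poly2 n bm) (\<lambda>z. - poly2 n am z) (cw_arc r \<alpha>) 0 pi)"

definition zexp :: "nat \<Rightarrow> nat \<Rightarrow> int" where
  "zexp m n = int ((n div 2) * m) - (int m ^ 2 - 5 * int m + 4) div 2"

definition qexp :: "nat \<Rightarrow> nat \<Rightarrow> int" where
  "qexp m n = int ((n div 2) * m) - (int m ^ 2 - 5 * int m) div 2"

definition basis :: "nat \<Rightarrow> nat \<Rightarrow> (real \<Rightarrow> real) list" where
  "basis m n =
     map (\<lambda>p. \<lambda>u. u ^ (2 * p + 1)) [0..<nat (zexp m n + 1)]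
   @ concat (map (\<lambda>s. map (\<lambda>j. \<lambda>u. u ^ nat (2 * qexp m n + 2 * int s + int j * (int m - 1) + 1))
                          [0..<2 * s + 2])
                 [0..<nat ((int m - 3) div 2)])
   @ map (\<lambda>l. \<lambda>u. (u ^ 2 + u ^ (2 * m)) ^ (l + 1)) [0..<nat ((int n - 1) div 2 + 1)]"

end

theory Submission
  imports Defs
begin

text \<open>
  At the switching points (u, u^m) and (-u, -u^m) the circle x^2 + y^2 = h has polar angles
  alpha and alpha + pi, where r cos alpha = u and r sin alpha = u^m. Expanding p and q, each half
  of M(h) is a combination of r^(a+b) times the half-circle moments
  J(a, b, t) = integral of cos^a (t - s) sin^b (t - s) over s in [0, pi], with 1 <= a + b <= n + 1.
  If a + b is odd, integration by parts gives cos^a sin^b an antiderivative that is a homogeneous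
  trigonometric form of degree a + b; such forms change sign under t -> t + pi, so J(a, b, -) is
  such a form as well, and r^(a+b) J(a, b, alpha) is a combination of u^(a+b-j) (u^m)^j, that is
  of u^(2(D+kj)+1) with a + b = 2D + 1 and j <= 2D + 1. If a + b is even the integrand has period
  pi, so J(a, b, -) is constant and r^(a+b) = (u^2 + u^(2m))^((a+b)/2). The exponents D + kj with
  D <= [n/2] and j <= 2D + 1 are exactly the odd exponents listed in the basis. Conversely,
  u^(a+mj) is the integral of the exact form d(x^a y^j)/2 over the upper arc, and (u^2 + u^(2m))^e
  comes from p^- = x^(2e-1) / J(2e, 0, 0). Finally, the basis functions are polynomials with
  pairwise distinct orders at 0, hence linearly independent on (0, infinity).
\<close>

section \<open>Homogeneous trigonometric forms\<close>

definition trig_form :: "nat \<Rightarrow> (nat \<Rightarrow> real) \<Rightarrow> real \<Rightarrow> real" where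
  "trig_form d \<kappa> t = (\<Sum>j\<le>d. \<kappa> j * cos t ^ (d - j) * sin t ^ j)"

lemma trig_form_lincomb:
  "trig_form d (\<lambda>j. x * \<kappa> j + y * \<mu> j) t = x * trig_form d \<kappa> t + y * trig_form d \<mu> t"
  by (simp add: trig_form_def sum_distrib_left sum.distrib algebra_simps)

lemma trig_form_scale: "trig_form d (\<lambda>j. x * \<kappa> j) t = x * trig_form d \<kappa> t"
  by (simp add: trig_form_def sum_distrib_left algebra_simps)

lemma trig_form_add_pi: "trig_form d \<kappa> (t + pi) = (-1) ^ d * trig_form d \<kappa> t"
  unfolding trig_form_def sum_distrib_left
proof (rule sum.cong)
  fix j assume "j \<in> {..d}"
  then have "(-1::real) ^ (d - j) * (-1) ^ j = (-1) ^ d"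
    by (simp flip: power_add)
  then show "\<kappa> j * cos (t + pi) ^ (d - j) * sin (t + pi) ^ j
      = (-1) ^ d * (\<kappa> j * cos t ^ (d - j) * sin t ^ j)"
    by (simp add: power_minus[of "cos t"] power_minus[of "sin t"] algebra_simps)
qed simp

lemma trig_form_reflect:
  "trig_form d \<kappa> (pi / 2 - t) = trig_form d (\<lambda>j. \<kappa> (d - j)) t"
proof -
  have "cos (pi / 2 - t) = sin t" "sin (pi / 2 - t) = cos t"
    by (simp_all add: cos_diff sin_diff)
  then show ?thesis
    unfolding trig_form_def
    by (intro sum.reindex_bij_witness[where i="\<lambda>j. d - j" and j="\<lambda>j. d - j"]) auto
qed

lemma trig_form_monomial:
  assumes "a + b = d"
  shows "trig_form d (\<lambda>j. if j = b then 1 else 0) t = cos t ^ a * sin t ^ b"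
proof -
  have "trig_form d (\<lambda>j. if j = b then 1 else 0) t
      = (\<Sum>j\<le>d. if j = b then cos t ^ (d - j) * sin t ^ j else 0)"
    unfolding trig_form_def by (rule sum.cong) auto
  then show ?thesis
    using assms by auto
qed

definition has_form_antiderivative :: "nat \<Rightarrow> (real \<Rightarrow> real) \<Rightarrow> bool" where
  "has_form_antiderivative d f \<longleftrightarrow> (\<exists>\<kappa>. \<forall>t. (trig_form d \<kappa> has_real_derivative f t) (at t))"

lemma has_form_antiderivative_lincomb:
  assumes "has_form_antiderivative d f" "has_form_antiderivative d g"
  shows "has_form_antiderivative d (\<lambda>t. x * f t + y * g t)"
proof -
  obtain \<kappa> \<mu> where \<kappa>: "\<And>t. (trig_form d \<kappa> has_real_derivative f t) (at t)"
    and \<mu>: "\<And>t. (trig_form d \<mu> has_real_derivative g t) (at t)"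
    using assms unfolding has_form_antiderivative_def by blast
  have "((\<lambda>t. x * trig_form d \<kappa> t + y * trig_form d \<mu> t) has_real_derivative x * f t + y * g t) (at t)"
    for t by (auto intro!: derivative_eq_intros \<kappa> \<mu>)
  then show ?thesis
    unfolding has_form_antiderivative_def trig_form_lincomb[symmetric] by blast
qed

lemma has_form_antiderivative_cong:
  assumes "has_form_antiderivative d f" "\<And>t. g t = f t"
  shows "has_form_antiderivative d g"
proof -
  have "g = f"
    using assms(2) by (rule ext)
  then show ?thesis
    using assms(1) by simp
qed

lemma has_form_antiderivativeI:
  assumes "a + b = d" "\<And>t. ((\<lambda>t. cos t ^ a * sin t ^ b) has_real_derivative f t) (at t)"
  shows "has_form_antiderivative d f"
proof -
  have "trig_form d (\<lambda>j. if j = b then 1 else 0) = (\<lambda>t. cos t ^ a * sin t ^ b)"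
    by (intro ext trig_form_monomial assms(1))
  then show ?thesis
    unfolding has_form_antiderivative_def
    by (intro exI[of _ "\<lambda>j. if j = b then 1 else 0"]) (simp add: assms(2))
qed

lemma has_form_antiderivative_reflect:
  assumes "has_form_antiderivative d f"
  shows "has_form_antiderivative d (\<lambda>t. f (pi / 2 - t))"
proof -
  obtain \<kappa> where \<kappa>: "\<And>t. (trig_form d \<kappa> has_real_derivative f t) (at t)"
    using assms unfolding has_form_antiderivative_def by blast
  have "((\<lambda>t. - trig_form d \<kappa> (pi / 2 - t)) has_real_derivative f (pi / 2 - t)) (at t)" for t
    by (rule DERIV_chain2[OF \<kappa>, THEN DERIV_minus, THEN DERIV_cong]) (auto intro!: derivative_eq_intros)
  moreover have "trig_form d (\<lambda>j. - \<kappa> (d - j)) = (\<lambda>t. - trig_form d \<kappa> (pi / 2 - t))"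
    using trig_form_scale[of d "-1" "\<lambda>j. \<kappa> (d - j)"]
    by (simp add: trig_form_reflect fun_eq_iff)
  ultimately show ?thesis
    unfolding has_form_antiderivative_def by (intro exI[of _ "\<lambda>j. - \<kappa> (d - j)"]) simp
qed

text \<open>For b = 0 the first term vanishes, so the truncated exponent b - 1 is harmless.\<close>

lemma DERIV_cos_sin_power:
  "((\<lambda>t. cos t ^ Suc a * sin t ^ b) has_real_derivative
     real b * cos t ^ (a + 2) * sin t ^ (b - 1) - real (Suc a) * cos t ^ a * sin t ^ Suc b) (at t)"
  by (rule derivative_eq_intros refl)+ (simp add: algebra_simps power2_eq_square)

text \<open>Integration by parts: the derivative of cos^(a+1) sin^(b+1) trades cos^a sin^(b+2)
  for cos^(a+2) sin^b within the same degree.\<close>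

lemma has_form_antiderivative_shift_sin:
  assumes "has_form_antiderivative (a + b + 2) (\<lambda>t. cos t ^ (a + 2) * sin t ^ b)"
  shows "has_form_antiderivative (a + b + 2) (\<lambda>t. cos t ^ a * sin t ^ (b + 2))"
proof -
  have "has_form_antiderivative (a + b + 2)
      (\<lambda>t. real (b + 1) * cos t ^ (a + 2) * sin t ^ (b + 1 - 1) - real (Suc a) * cos t ^ a * sin t ^ Suc (b + 1))"
    by (rule has_form_antiderivativeI[OF _ DERIV_cos_sin_power]) simp
  from has_form_antiderivative_lincomb[OF assms this, of "real (b + 1) / real (Suc a)" "- 1 / real (Suc a)"]
  show ?thesis
  proof (rule has_form_antiderivative_cong)
    fix t
    have identity: "x = c / r * y + - 1 / r * (c * y - r * x)" if "r \<noteq> 0" for x y c r :: real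
      using that by (simp add: field_simps)
    have "b + 1 - 1 = b" "Suc (b + 1) = b + 2"
      by simp_all
    then show "cos t ^ a * sin t ^ (b + 2) = real (b + 1) / real (Suc a) * (cos t ^ (a + 2) * sin t ^ b)
        + - 1 / real (Suc a) * (real (b + 1) * cos t ^ (a + 2) * sin t ^ (b + 1 - 1)
          - real (Suc a) * cos t ^ a * sin t ^ Suc (b + 1))"
      using identity[where r="real (Suc a)" and x="cos t ^ a * sin t ^ (b + 2)" and c="real (b + 1)"
          and y="cos t ^ (a + 2) * sin t ^ b", OF of_nat_neq_0]
      by (simp only: mult.assoc)
  qed
qed

lemma has_form_antiderivative_sin_odd:
  "has_form_antiderivative (a + 2 * b + 1) (\<lambda>t. cos t ^ a * sin t ^ (2 * b + 1))"
proof (induction b arbitrary: a)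
  case 0
  have "has_form_antiderivative (a + 2 * 0 + 1)
      (\<lambda>t. real 0 * cos t ^ (a + 2) * sin t ^ (0 - 1) - real (Suc a) * cos t ^ a * sin t ^ Suc 0)"
    by (rule has_form_antiderivativeI[OF _ DERIV_cos_sin_power]) simp
  from has_form_antiderivative_lincomb[OF this this, of "- 1 / real (Suc a)" 0]
  show ?case
    by (rule has_form_antiderivative_cong) (simp add: field_simps del: of_nat_Suc)
next
  case (Suc b)
  then show ?case
    using has_form_antiderivative_shift_sin[of a "2 * b + 1"] Suc.IH[of "a + 2"]
    by (simp add: algebra_simps)
qed

lemma has_form_antiderivative_odd:
  assumes "odd (a + b)"
  shows "has_form_antiderivative (a + b) (\<lambda>t. cos t ^ a * sin t ^ b)"
proof (cases "odd b")
  case True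
  then obtain b' where "b = 2 * b' + 1"
    by (metis oddE)
  then show ?thesis
    using has_form_antiderivative_sin_odd[of a b'] by (simp add: algebra_simps)
next
  case False
  with assms obtain a' where a: "a = 2 * a' + 1"
    by (metis odd_add oddE)
  have "cos t ^ a * sin t ^ b = cos (pi / 2 - t) ^ b * sin (pi / 2 - t) ^ (2 * a' + 1)" for t
    by (simp add: a cos_diff sin_diff)
  then show ?thesis
    using has_form_antiderivative_reflect[OF has_form_antiderivative_sin_odd[of b a']] a
    by (simp add: algebra_simps)
qed

section \<open>Moments over half circles\<close>

definition half_arc_moment :: "nat \<Rightarrow> nat \<Rightarrow> real \<Rightarrow> real" where
  "half_arc_moment a b t = integral {0..pi} (\<lambda>s. cos (t - s) ^ a * sin (t - s) ^ b)"

lemma has_integral_reflected_antiderivative: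
  assumes G: "\<And>t. (G has_real_derivative g t) (at t)" and "0 \<le> p"
  shows "((\<lambda>s. g (t - s)) has_integral G t - G (t - p)) {0..p}"
proof -
  have "((\<lambda>s. - G (t - s)) has_real_derivative g (t - s)) (at s)" for s
    by (rule DERIV_chain2[OF G, THEN DERIV_minus, THEN DERIV_cong])
       (auto intro!: derivative_eq_intros)
  then have "((\<lambda>s. g (t - s)) has_integral - G (t - p) - - G (t - 0)) {0..p}"
    using \<open>0 \<le> p\<close>
    by (intro fundamental_theorem_of_calculus)
       (auto simp: has_real_derivative_iff_has_vector_derivative has_vector_derivative_at_within)
  then show ?thesis
    by simp
qed

lemma integral_reflected_periodic:
  fixes g :: "real \<Rightarrow> real"
  assumes "continuous_on UNIV g" and periodic: "\<And>t. g (t + p) = g t" and "0 \<le> p"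
  shows "integral {0..p} (\<lambda>s. g (t - s)) = integral {0..p} (\<lambda>s. g (- s))"
proof -
  obtain G where G: "\<And>t. (G has_real_derivative g t) (at t)"
    using einterval_antiderivative[of "-\<infinity>" "\<infinity>" g] assms(1)
    by (auto simp: continuous_on_eq_continuous_at has_real_derivative_iff_has_vector_derivative)
  have "((\<lambda>t. G (t - p)) has_real_derivative g (t - p)) (at t)" for t
    by (rule DERIV_chain2[OF G, THEN DERIV_cong]) (auto intro!: derivative_eq_intros)
  then have "((\<lambda>t. G t - G (t - p)) has_real_derivative g t - g (t - p)) (at t)" for t
    by (rule DERIV_diff[OF G])
  moreover have "g t - g (t - p) = 0" for t
    using periodic[of "t - p"] by simp
  ultimately have "((\<lambda>t. G t - G (t - p)) has_real_derivative 0) (at t)" for t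
    by metis
  then have "G t - G (t - p) = G 0 - G (0 - p)"
    using DERIV_isconst_all[of "\<lambda>t. G t - G (t - p)"] by blast
  then show ?thesis
    using has_integral_reflected_antiderivative[OF G \<open>0 \<le> p\<close>, of t]
      has_integral_reflected_antiderivative[OF G \<open>0 \<le> p\<close>, of 0]
    by (simp add: integral_unique)
qed

lemma half_arc_moment_add_pi:
  "half_arc_moment a b (t + pi) = (-1) ^ (a + b) * half_arc_moment a b t"
proof -
  have "cos (t + pi - s) ^ a * sin (t + pi - s) ^ b = (-1) ^ (a + b) * (cos (t - s) ^ a * sin (t - s) ^ b)"
    for s
  proof -
    have "t + pi - s = (t - s) + pi"
      by simp
    then show ?thesis
      by (simp only: cos_periodic_pi sin_periodic_pi power_minus[of "cos (t - s)"]
          power_minus[of "sin (t - s)"] power_add mult_ac)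
  qed
  then show ?thesis
    unfolding half_arc_moment_def by (simp only: integral_mult_right)
qed

lemma half_arc_moment_odd:
  assumes "odd (a + b)"
  shows "\<exists>\<kappa>. half_arc_moment a b = trig_form (a + b) \<kappa>"
proof -
  obtain \<kappa> where \<kappa>: "\<And>t. (trig_form (a + b) \<kappa> has_real_derivative cos t ^ a * sin t ^ b) (at t)"
    using has_form_antiderivative_odd[OF assms] unfolding has_form_antiderivative_def by blast
  have "half_arc_moment a b t = trig_form (a + b) (\<lambda>j. 2 * \<kappa> j) t" for t
  proof -
    have "trig_form (a + b) \<kappa> (t - pi) = - trig_form (a + b) \<kappa> t"
      using trig_form_add_pi[of "a + b" \<kappa> "t - pi"] assms by simp
    then show ?thesis
      using has_integral_reflected_antiderivative[OF \<kappa> pi_ge_zero, of t]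
      by (simp add: half_arc_moment_def integral_unique trig_form_scale)
  qed
  then show ?thesis
    by blast
qed

lemma half_arc_moment_even:
  assumes "even (a + b)"
  shows "half_arc_moment a b t = half_arc_moment a b 0"
proof -
  let ?g = "\<lambda>t. cos t ^ a * sin t ^ b"
  have "?g (t + pi) = ?g t" for t
    using assms power_minus[of "cos t" a] power_minus[of "sin t" b]
    by (simp add: power_add[symmetric] del: minus_power_mult_self)
  then have "integral {0..pi} (\<lambda>s. ?g (t - s)) = integral {0..pi} (\<lambda>s. ?g (- s))"
    by (intro integral_reflected_periodic) (auto intro!: continuous_intros)
  then show ?thesis
    unfolding half_arc_moment_def by simp
qed

lemma half_arc_moment_cos_even_nonzero: "half_arc_moment (2 * e) 0 t \<noteq> 0"
proof
  assume "half_arc_moment (2 * e) 0 t = 0"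
  then have zero: "half_arc_moment (2 * e) 0 0 = 0"
    using half_arc_moment_even[of "2 * e" 0 t] by simp
  define f where "f s = cos (0 - s) ^ (2 * e) * sin (0 - s) ^ 0" for s :: real
  have cont: "continuous_on (cbox 0 pi) f"
    unfolding f_def by (intro continuous_intros)
  have "(f has_integral 0) (cbox 0 pi)"
    using zero integrable_integral[OF integrable_continuous_real[OF cont[unfolded cbox_interval]]]
    unfolding half_arc_moment_def f_def by (simp add: cbox_interval)
  moreover have "box 0 pi \<noteq> {}" "(0::real) \<in> cbox 0 pi"
    by (simp_all add: box_real not_le)
  ultimately have "f 0 = 0"
    using cont by (intro has_integral_0_cbox_imp_0[of 0 pi f 0]) (auto simp: f_def zero_le_even_power)
  then show False
    unfolding f_def by simp
qed

section \<open>The Melnikov function in polar coordinates\<close>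

definition half_circle_integral ::
  "nat \<Rightarrow> (nat \<Rightarrow> nat \<Rightarrow> real) \<Rightarrow> (nat \<Rightarrow> nat \<Rightarrow> real) \<Rightarrow> real \<Rightarrow> real \<Rightarrow> real" where
  "half_circle_integral n a b r t = line_integral (poly2 n b) (\<lambda>z. - poly2 n a z) (cw_arc r t) 0 pi"

lemma vector_derivative_cw_arc:
  "vector_derivative (cw_arc r t) (at s) = (r * sin (t - s), - (r * cos (t - s)))"
proof (rule vector_derivative_at)
  have "((\<lambda>s. r * cos (t - s)) has_real_derivative r * sin (t - s)) (at s)"
    "((\<lambda>s. r * sin (t - s)) has_real_derivative - (r * cos (t - s))) (at s)"
    by (auto intro!: derivative_eq_intros)
  then show "(cw_arc r t has_vector_derivative (r * sin (t - s), - (r * cos (t - s)))) (at s)"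
    unfolding cw_arc_def has_real_derivative_iff_has_vector_derivative
    by (rule has_vector_derivative_Pair)
qed

lemma half_circle_integral_eq_moments:
  "half_circle_integral n a b r t =
     (\<Sum>i\<le>n. \<Sum>j\<le>n - i. r ^ (i + j + 1) *
        (b i j * half_arc_moment i (Suc j) t + a i j * half_arc_moment (Suc i) j t))"
proof -
  define T where "T i j s = r ^ (i + j + 1) *
      (b i j * (cos (t - s) ^ i * sin (t - s) ^ Suc j) + a i j * (cos (t - s) ^ Suc i * sin (t - s) ^ j))"
    for i j s
  have integrand: "poly2 n b (cw_arc r t s) * fst (vector_derivative (cw_arc r t) (at s))
      + - poly2 n a (cw_arc r t s) * snd (vector_derivative (cw_arc r t) (at s))
      = (\<Sum>i\<le>n. \<Sum>j\<le>n - i. T i j s)" for s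
  proof -
    have "poly2 n b (cw_arc r t s) * fst (vector_derivative (cw_arc r t) (at s))
        + - poly2 n a (cw_arc r t s) * snd (vector_derivative (cw_arc r t) (at s))
      = (\<Sum>i\<le>n. \<Sum>j\<le>n - i. b i j * (r * cos (t - s)) ^ i * (r * sin (t - s)) ^ j * (r * sin (t - s)))
      + (\<Sum>i\<le>n. \<Sum>j\<le>n - i. a i j * (r * cos (t - s)) ^ i * (r * sin (t - s)) ^ j * (r * cos (t - s)))"
      by (simp add: vector_derivative_cw_arc poly2_def cw_arc_def sum_distrib_right)
    also have "\<dots> = (\<Sum>i\<le>n. \<Sum>j\<le>n - i. T i j s)"
      by (simp add: T_def sum.distrib[symmetric] power_mult_distrib power_add algebra_simps)
    finally show ?thesis .
  qed
  have integrable: "T i j integrable_on {0..pi}" for i j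
    unfolding T_def by (intro integrable_continuous_real continuous_intros)
  have "half_circle_integral n a b r t = integral {0..pi} (\<lambda>s. \<Sum>i\<le>n. \<Sum>j\<le>n - i. T i j s)"
    unfolding half_circle_integral_def line_integral_def integrand ..
  also have "\<dots> = (\<Sum>i\<le>n. \<Sum>j\<le>n - i. integral {0..pi} (T i j))"
    by (simp add: integral_sum integrable integrable_sum)
  also have "\<dots> = (\<Sum>i\<le>n. \<Sum>j\<le>n - i. r ^ (i + j + 1) *
        (b i j * half_arc_moment i (Suc j) t + a i j * half_arc_moment (Suc i) j t))"
    unfolding T_def half_arc_moment_def
    by (simp add: integral_add integrable_continuous_real continuous_intros)
  finally show ?thesis .
qed

lemma half_circle_integral_lincomb:
  "half_circle_integral n (\<lambda>i j. x * a i j + y * a' i j) (\<lambda>i j. x * b i j + y * b' i j) r t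
     = x * half_circle_integral n a b r t + y * half_circle_integral n a' b' r t"
  by (simp add: half_circle_integral_eq_moments sum_distrib_left sum.distrib algebra_simps)

definition monomial_coeffs :: "nat \<Rightarrow> nat \<Rightarrow> real \<Rightarrow> nat \<Rightarrow> nat \<Rightarrow> real" where
  "monomial_coeffs i0 j0 c i j = (if i = i0 \<and> j = j0 then c else 0)"

lemma triangle_sum_delta:
  assumes "i0 + j0 \<le> (n::nat)"
  shows "(\<Sum>i\<le>n. \<Sum>j\<le>n - i. if i = i0 \<and> j = j0 then f i j else 0) = (f i0 j0 :: 'a::comm_monoid_add)"
proof -
  have "j0 \<in> {..n - i0}"
    using assms by simp
  then have "(\<Sum>j\<le>n - i. if i = i0 \<and> j = j0 then f i j else 0) = (if i = i0 then f i0 j0 else 0)" for i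
    by (cases "i = i0") (simp_all add: sum.delta)
  then show ?thesis
    using assms by simp
qed

lemma poly2_monomial_coeffs:
  assumes "i0 + j0 \<le> n \<or> c = 0"
  shows "poly2 n (monomial_coeffs i0 j0 c) (x, y) = c * x ^ i0 * y ^ j0"
proof (cases "c = 0")
  case False
  then have "poly2 n (monomial_coeffs i0 j0 c) (x, y)
      = (\<Sum>i\<le>n. \<Sum>j\<le>n - i. if i = i0 \<and> j = j0 then c * x ^ i * y ^ j else 0)"
    unfolding poly2_def monomial_coeffs_def prod.case by (intro sum.cong) auto
  then show ?thesis
    using assms False by (simp add: triangle_sum_delta)
qed (simp add: poly2_def monomial_coeffs_def)

text \<open>The coefficients below make q dx - p dy the exact differential of x^a y^b / 2.\<close>

lemma half_circle_integral_exact: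
  assumes "a + b \<le> n + 1"
  shows "half_circle_integral n (monomial_coeffs a (b - 1) (- real b / 2))
           (monomial_coeffs (a - 1) b (real a / 2)) r t
       = ((r * cos (t - pi)) ^ a * (r * sin (t - pi)) ^ b - (r * cos t) ^ a * (r * sin t) ^ b) / 2"
proof -
  define F where "F s = (r * cos (t - s)) ^ a * (r * sin (t - s)) ^ b / 2" for s
  have "(F has_real_derivative
        real a / 2 * (r * cos (t - s)) ^ (a - 1) * (r * sin (t - s)) ^ b * (r * sin (t - s))
        + - (- real b / 2 * (r * cos (t - s)) ^ a * (r * sin (t - s)) ^ (b - 1)) * - (r * cos (t - s)))
        (at s)" for s
    unfolding F_def by (rule derivative_eq_intros refl)+ (simp_all add: field_simps)
  moreover have "a - 1 + b \<le> n \<or> real a / 2 = 0" "a + (b - 1) \<le> n \<or> - real b / 2 = 0"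
    using assms by auto
  ultimately have "((\<lambda>s. poly2 n (monomial_coeffs (a - 1) b (real a / 2)) (cw_arc r t s)
        * fst (vector_derivative (cw_arc r t) (at s))
      + - poly2 n (monomial_coeffs a (b - 1) (- real b / 2)) (cw_arc r t s)
        * snd (vector_derivative (cw_arc r t) (at s))) has_integral F pi - F 0) {0..pi}"
    by (intro fundamental_theorem_of_calculus)
       (auto simp: vector_derivative_cw_arc cw_arc_def poly2_monomial_coeffs
         has_real_derivative_iff_has_vector_derivative[symmetric] has_field_derivative_at_within)
  then show ?thesis
    unfolding half_circle_integral_def line_integral_def
    by (simp add: integral_unique F_def diff_divide_distrib)
qed

lemma u_of_inverse:
  assumes "0 < u" "1 \<le> m"
  shows "u_of m (u ^ 2 + u ^ (2 * m)) = u"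
  unfolding u_of_def
proof (rule the_equality)
  fix v :: real
  assume v: "0 < v \<and> v ^ 2 + v ^ (2 * m) = u ^ 2 + u ^ (2 * m)"
  have "0 < 2 * m"
    using assms(2) by simp
  show "v = u"
  proof (rule linorder_cases[of v u])
    assume "v < u"
    then have "v ^ 2 < u ^ 2" "v ^ (2 * m) < u ^ (2 * m)"
      using v \<open>0 < 2 * m\<close> by (auto intro!: power_strict_mono)
    then show ?thesis
      using v by simp
  next
    assume "u < v"
    then have "u ^ 2 < v ^ 2" "u ^ (2 * m) < v ^ (2 * m)"
      using assms(1) \<open>0 < 2 * m\<close> by (auto intro!: power_strict_mono)
    then show ?thesis
      using v by simp
  qed
qed (use assms in simp)

definition polar_radius :: "nat \<Rightarrow> real \<Rightarrow> real" where
  "polar_radius m u = sqrt (u ^ 2 + u ^ (2 * m))"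

definition polar_angle :: "nat \<Rightarrow> real \<Rightarrow> real" where
  "polar_angle m u = arctan (u ^ m / u)"

lemma polar_radius_power_even:
  "polar_radius m u ^ (2 * e) = (u ^ 2 + u ^ (2 * m)) ^ e"
  unfolding polar_radius_def power_mult by (simp add: add_nonneg_nonneg)

lemma polar_cos_sin:
  assumes "0 < u"
  shows "polar_radius m u * cos (polar_angle m u) = u"
    and "polar_radius m u * sin (polar_angle m u) = u ^ m"
proof -
  define x where "x = u ^ m / u"
  have ux: "u * x = u ^ m"
    unfolding x_def using assms by simp
  have "u ^ (2 * m) = (u * x) ^ 2"
    unfolding ux by (simp flip: power_mult add: mult.commute)
  then have "u ^ 2 + u ^ (2 * m) = u ^ 2 * (1 + x ^ 2)"
    by (simp add: power_mult_distrib algebra_simps)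
  then have "polar_radius m u = u * sqrt (1 + x ^ 2)"
    unfolding polar_radius_def using assms by (simp add: real_sqrt_mult)
  moreover have "sqrt (1 + x ^ 2) > 0"
    by (simp add: add_pos_nonneg)
  ultimately show "polar_radius m u * cos (polar_angle m u) = u"
    and "polar_radius m u * sin (polar_angle m u) = u ^ m"
    unfolding polar_angle_def x_def[symmetric] cos_arctan sin_arctan using ux by simp_all
qed

lemma melnikov_polar:
  assumes "0 < u" "1 \<le> m"
  shows "melnikov m n ap bp am bm (u ^ 2 + u ^ (2 * m))
    = half_circle_integral n ap bp (polar_radius m u) (polar_angle m u + pi)
      + half_circle_integral n am bm (polar_radius m u) (polar_angle m u)"
  unfolding melnikov_def Let_def u_of_inverse[OF assms] half_circle_integral_def
    polar_radius_def polar_angle_def ..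

lemma melnikov_lincomb:
  "melnikov m n (\<lambda>i j. x * ap i j + y * ap' i j) (\<lambda>i j. x * bp i j + y * bp' i j)
       (\<lambda>i j. x * am i j + y * am' i j) (\<lambda>i j. x * bm i j + y * bm' i j) h
     = x * melnikov m n ap bp am bm h + y * melnikov m n ap' bp' am' bm' h"
  unfolding melnikov_def Let_def half_circle_integral_def[symmetric] half_circle_integral_lincomb
  by (simp add: algebra_simps)

section \<open>The odd exponents of the basis\<close>

definition zexp_nat :: "nat \<Rightarrow> nat \<Rightarrow> nat" where
  "zexp_nat k N = N + k * (2 * (N - k) + 3)"

definition odd_exponents :: "nat \<Rightarrow> nat \<Rightarrow> nat list" where
  "odd_exponents k N = [0..<zexp_nat k N + 1]
     @ concat (map (\<lambda>s. map (\<lambda>j. zexp_nat k N + 2 + s + j * k) [0..<2 * s + 2]) [0..<k - 1])"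

lemma zexp_nat_int:
  assumes "k \<le> N"
  shows "int (zexp_nat k N) = int N + 2 * int N * int k + 3 * int k - 2 * int k ^ 2"
proof -
  have "int (zexp_nat k N) = int N + int k * (2 * (int N - int k) + 3)"
    using assms by (simp add: zexp_nat_def of_nat_diff)
  then show ?thesis
    by (simp add: algebra_simps power2_eq_square)
qed

lemma zexp_eq:
  assumes "m = 2 * k + 1" "k \<le> n div 2"
  shows "zexp m n = int (zexp_nat k (n div 2))"
proof -
  have "(int m ^ 2 - 5 * int m + 4) div 2 = 2 * int k ^ 2 - 3 * int k"
    using assms(1) by (simp add: power2_eq_square algebra_simps)
  then show ?thesis
    using assms by (simp add: zexp_def zexp_nat_int algebra_simps)
qed

lemma qexp_eq:
  assumes "m = 2 * k + 1" "k \<le> n div 2"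
  shows "qexp m n = int (zexp_nat k (n div 2)) + 2"
proof -
  have "(int m ^ 2 - 5 * int m) div 2 = 2 * int k ^ 2 - 3 * int k - 2"
    using assms(1) by (simp add: power2_eq_square algebra_simps)
  then show ?thesis
    using assms by (simp add: qexp_def zexp_nat_int algebra_simps)
qed

lemma basis_split:
  assumes "m = 2 * k + 1" "k \<le> n div 2"
  shows "basis m n = map (\<lambda>v u. u ^ (2 * v + 1)) (odd_exponents k (n div 2))
                     @ map (\<lambda>l u. (u ^ 2 + u ^ (2 * m)) ^ (l + 1)) [0..<(n + 1) div 2]"
proof -
  have "2 * qexp m n + 2 * int s + int j * (int m - 1) + 1
      = int (2 * (zexp_nat k (n div 2) + 2 + s + j * k) + 1)" for s j
    using assms by (simp add: qexp_eq algebra_simps)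
  then have "nat (2 * qexp m n + 2 * int s + int j * (int m - 1) + 1)
      = 2 * (zexp_nat k (n div 2) + 2 + s + j * k) + 1" for s j
    by (simp only: nat_int)
  moreover have "nat (zexp m n + 1) = zexp_nat k (n div 2) + 1"
    using zexp_eq[OF assms] by simp
  moreover have "nat ((int m - 3) div 2) = k - 1" "nat ((int n - 1) div 2 + 1) = (n + 1) div 2"
    using assms(1) by auto
  ultimately show ?thesis
    unfolding basis_def odd_exponents_def by (simp add: map_concat comp_def)
qed

lemma zexp_nat_gap_eq:
  assumes "k \<le> N"
  shows "zexp_nat k N + 2 + s + j * k = (N - k + 2 + s) + k * (j + 2 * (N - k) + 4)"
proof -
  obtain c where "N = k + c"
    using assms le_Suc_ex by blast
  then show ?thesis
    unfolding zexp_nat_def by (simp add: algebra_simps)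
qed

lemma odd_exponent_initial_segment:
  assumes "p \<le> zexp_nat k N" "k \<le> N"
  shows "\<exists>D j. D \<le> N \<and> j \<le> 2 * D + 1 \<and> p = D + k * j"
  using assms(1)
proof (induction p)
  case 0
  show ?case
    by (intro exI[of _ 0]) simp
next
  case (Suc p)
  then obtain D j where Dj: "D \<le> N" "j \<le> 2 * D + 1" "p = D + k * j"
    by auto
  show ?case
  proof (cases "D < N")
    case True
    then show ?thesis
      using Dj by (intro exI[of _ "Suc D"] exI[of _ j]) auto
  next
    case False
    with Dj(1) have "D = N"
      by simp
    have "k * j < k * (2 * (N - k) + 3)"
      using Suc.prems Dj(3) \<open>D = N\<close> unfolding zexp_nat_def by linarith
    then have "0 < k \<and> j < 2 * (N - k) + 3"
      by (rule mult_less_cancel1[THEN iffD1])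
    moreover obtain c where "N = k + c"
      using assms(2) le_Suc_ex by blast
    ultimately show ?thesis
      using Dj \<open>D = N\<close>
      by (intro exI[of _ "N + 1 - k"] exI[of _ "Suc j"]) (auto simp: algebra_simps)
  qed
qed

lemma odd_exponent_above_initial_segment:
  assumes "D \<le> N" "j \<le> 2 * D + 1" "zexp_nat k N < D + k * j" "k \<le> N"
  shows "\<exists>s j'. s < k - 1 \<and> j' < 2 * s + 2 \<and> D + k * j = zexp_nat k N + 2 + s + j' * k"
proof -
  have "k * (2 * (N - k) + 3) < k * j"
    using assms(1,3) unfolding zexp_nat_def by linarith
  then have "2 * (N - k) + 4 \<le> j"
    by simp
  then obtain j' where j': "j = 2 * (N - k) + 4 + j'"
    using le_Suc_ex by blast
  then obtain s where s: "D = N - k + 2 + s"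
    using assms(2) le_Suc_ex[of "N - k + 2" D] by fastforce
  show ?thesis
  proof (intro exI conjI)
    show "s < k - 1" "j' < 2 * s + 2"
      using assms(1,2) s j' by linarith+
    have "D + k * j = (N - k + 2 + s) + k * (j' + 2 * (N - k) + 4)"
      unfolding s j' by (simp add: ac_simps)
    then show "D + k * j = zexp_nat k N + 2 + s + j' * k"
      using zexp_nat_gap_eq[OF assms(4)] by simp
  qed
qed

lemma odd_exponentsE:
  assumes "p \<in> set (odd_exponents k N)"
  obtains "p \<le> zexp_nat k N"
    | s j where "s < k - 1" "j < 2 * s + 2" "p = zexp_nat k N + 2 + s + j * k"
  using assms unfolding odd_exponents_def by (auto simp del: upt_Suc)

lemma odd_exponents_gapI:
  assumes "s < k - 1" "j < 2 * s + 2"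
  shows "zexp_nat k N + 2 + s + j * k \<in> set (odd_exponents k N)"
  using assms unfolding odd_exponents_def by (auto simp del: upt_Suc intro!: bexI[of _ s])

lemma odd_exponents_representable:
  assumes "p \<in> set (odd_exponents k N)" "k \<le> N"
  shows "\<exists>D j. D \<le> N \<and> j \<le> 2 * D + 1 \<and> p = D + k * j"
  using assms(1)
proof (cases rule: odd_exponentsE)
  case 1
  then show ?thesis
    using odd_exponent_initial_segment[OF _ assms(2)] by blast
next
  case (2 s j)
  then have "p = (N - k + 2 + s) + k * (j + 2 * (N - k) + 4)"
    using zexp_nat_gap_eq[OF assms(2)] by simp
  moreover have "N - k + 2 + s \<le> N"
    using 2 assms(2) by linarith
  moreover have "j + 2 * (N - k) + 4 \<le> 2 * (N - k + 2 + s) + 1"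
    using 2 by simp
  ultimately show ?thesis
    by blast
qed

lemma representable_in_odd_exponents:
  assumes "D \<le> N" "j \<le> 2 * D + 1" "k \<le> N"
  shows "D + k * j \<in> set (odd_exponents k N)"
proof (cases "D + k * j \<le> zexp_nat k N")
  case True
  then show ?thesis
    unfolding odd_exponents_def by (simp del: upt_Suc)
next
  case False
  then obtain s j' where "s < k - 1" "j' < 2 * s + 2" "D + k * j = zexp_nat k N + 2 + s + j' * k"
    using odd_exponent_above_initial_segment[OF assms(1,2) _ assms(3)] by auto
  then show ?thesis
    using odd_exponents_gapI by simp
qed

lemma set_odd_exponents:
  assumes "k \<le> N"
  shows "set (odd_exponents k N) = {D + k * j | D j. D \<le> N \<and> j \<le> 2 * D + 1}"
  using odd_exponents_representable[OF _ assms] representable_in_odd_exponents[OF _ _ assms] by blast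

lemma distinct_odd_exponents: "distinct (odd_exponents k N)"
proof -
  define Z where "Z = zexp_nat k N"
  define pairs where "pairs = concat (map (\<lambda>s. map (Pair s) [0..<2 * s + 2]) [0..<k - 1])"
  have "distinct pairs"
    unfolding pairs_def by (rule distinct_concat) (auto simp: distinct_map inj_on_def)
  moreover have "inj_on (\<lambda>(s, j). Z + 2 + s + j * k) (set pairs)"
  proof (rule inj_onI, clarify)
    fix s j s' j'
    assume "(s, j) \<in> set pairs" "(s', j') \<in> set pairs" and eq: "Z + 2 + s + j * k = Z + 2 + s' + j' * k"
    then have "s < k" "s' < k"
      unfolding pairs_def by auto
    have "s + j * k = s' + j' * k"
      using eq by simp
    then have "(s + j * k) mod k = (s' + j' * k) mod k"
      by simp
    with \<open>s < k\<close> \<open>s' < k\<close> have "s = s'"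
      by simp
    with eq \<open>s < k\<close> show "s = s' \<and> j = j'"
      by simp
  qed
  ultimately have "distinct (map (\<lambda>(s, j). Z + 2 + s + j * k) pairs)"
    by (simp add: distinct_map)
  moreover have "map (\<lambda>(s, j). Z + 2 + s + j * k) pairs
      = concat (map (\<lambda>s. map (\<lambda>j. Z + 2 + s + j * k) [0..<2 * s + 2]) [0..<k - 1])"
    unfolding pairs_def by (simp add: map_concat comp_def)
  ultimately show ?thesis
    unfolding odd_exponents_def Z_def[symmetric] by auto
qed

lemma length_odd_exponents:
  "length (odd_exponents k N) = zexp_nat k N + 1 + (k - 1) * k"
proof -
  have "length (concat (map (\<lambda>s. map (\<lambda>j. zexp_nat k N + 2 + s + j * k) [0..<2 * s + 2]) [0..<t]))
      = t * (t + 1)" for t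
    by (induction t) auto
  then show ?thesis
    unfolding odd_exponents_def by (cases k) (simp_all add: algebra_simps)
qed

section \<open>Every Melnikov function lies in the span of the basis\<close>

definition pos_span :: "(real \<Rightarrow> real) list \<Rightarrow> (real \<Rightarrow> real) \<Rightarrow> bool" where
  "pos_span fs f \<longleftrightarrow> (\<exists>c. \<forall>u>0. f u = (\<Sum>i<length fs. c i * (fs ! i) u))"

lemma pos_span_lincomb:
  assumes "pos_span fs f" "pos_span fs g"
  shows "pos_span fs (\<lambda>u. x * f u + y * g u)"
proof -
  obtain c d where "\<forall>u>0. f u = (\<Sum>i<length fs. c i * (fs ! i) u)"
    and "\<forall>u>0. g u = (\<Sum>i<length fs. d i * (fs ! i) u)"
    using assms unfolding pos_span_def by blast
  then show ?thesis
    unfolding pos_span_def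
    by (intro exI[of _ "\<lambda>i. x * c i + y * d i"])
       (simp add: sum_distrib_left sum.distrib algebra_simps)
qed

lemma pos_span_sum:
  assumes "finite A" "\<And>a. a \<in> A \<Longrightarrow> pos_span fs (f a)"
  shows "pos_span fs (\<lambda>u. \<Sum>a\<in>A. f a u)"
  using assms
proof (induction A rule: finite_induct)
  case empty
  show ?case
    unfolding pos_span_def by (intro exI[of _ "\<lambda>i. 0"]) simp
next
  case (insert a A)
  then show ?case
    using pos_span_lincomb[of fs "f a" "\<lambda>u. \<Sum>a\<in>A. f a u" 1 1] by simp
qed

lemma pos_span_cong: "pos_span fs f \<Longrightarrow> (\<And>u. 0 < u \<Longrightarrow> g u = f u) \<Longrightarrow> pos_span fs g"
  unfolding pos_span_def by auto

lemma pos_span_scaled_member: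
  assumes "f \<in> set fs"
  shows "pos_span fs (\<lambda>u. x * f u)"
proof -
  obtain i0 where i0: "i0 < length fs" "fs ! i0 = f"
    using assms by (auto simp: in_set_conv_nth)
  have "(\<Sum>i<length fs. (if i = i0 then x else 0) * (fs ! i) u)
      = (\<Sum>i<length fs. if i = i0 then x * f u else 0)" for u
    using i0 by (intro sum.cong) auto
  then have "x * f u = (\<Sum>i<length fs. (if i = i0 then x else 0) * (fs ! i) u)" for u
    using i0 by simp
  then show ?thesis
    unfolding pos_span_def by (intro exI[of _ "\<lambda>i. if i = i0 then x else 0"]) simp
qed

lemma odd_power_in_basis:
  assumes "m = 2 * k + 1" "k \<le> n div 2" "D \<le> n div 2" "j \<le> 2 * D + 1"
  shows "(\<lambda>u. u ^ (2 * (D + k * j) + 1)) \<in> set (basis m n)"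
proof -
  have "D + k * j \<in> set (odd_exponents k (n div 2))"
    using assms(3,4) set_odd_exponents[OF assms(2)] by blast
  then show ?thesis
    unfolding basis_split[OF assms(1,2)] set_append set_map by blast
qed

lemma even_power_in_basis:
  assumes "m = 2 * k + 1" "k \<le> n div 2" "1 \<le> e" "2 * e \<le> n + 1"
  shows "(\<lambda>u. (u ^ 2 + u ^ (2 * m)) ^ e) \<in> set (basis m n)"
proof -
  have "(\<lambda>u. (u ^ 2 + u ^ (2 * m)) ^ e) = (\<lambda>l u. (u ^ 2 + u ^ (2 * m)) ^ (l + 1)) (e - 1)"
    "e - 1 \<in> set [0..<(n + 1) div 2]"
    using assms(3,4) by auto
  then show ?thesis
    unfolding basis_split[OF assms(1,2)] set_append set_map by blast
qed

lemma basis_cases: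
  assumes "m = 2 * k + 1" "k \<le> n div 2" "f \<in> set (basis m n)"
  obtains D j where "D \<le> n div 2" "j \<le> 2 * D + 1" "f = (\<lambda>u. u ^ (2 * (D + k * j) + 1))"
    | e where "1 \<le> e" "2 * e \<le> n + 1" "f = (\<lambda>u. (u ^ 2 + u ^ (2 * m)) ^ e)"
proof -
  from assms(3) consider v where "v \<in> set (odd_exponents k (n div 2))" "f = (\<lambda>u. u ^ (2 * v + 1))"
    | l where "l < (n + 1) div 2" "f = (\<lambda>u. (u ^ 2 + u ^ (2 * m)) ^ (l + 1))"
    unfolding basis_split[OF assms(1,2)] by auto
  then show ?thesis
  proof cases
    case 1
    then show ?thesis
      using that(1) set_odd_exponents[OF assms(2)] by auto
  next
    case 2
    then show ?thesis
      using that(2)[of "l + 1"] by auto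
  qed
qed

lemma trig_form_polar:
  "r ^ d * trig_form d \<kappa> t = (\<Sum>j\<le>d. \<kappa> j * (r * cos t) ^ (d - j) * (r * sin t) ^ j)"
  unfolding trig_form_def sum_distrib_left
proof (rule sum.cong)
  fix j assume "j \<in> {..d}"
  then have "r ^ d = r ^ (d - j) * r ^ j"
    by (simp flip: power_add)
  then show "r ^ d * (\<kappa> j * cos t ^ (d - j) * sin t ^ j)
      = \<kappa> j * (r * cos t) ^ (d - j) * (r * sin t) ^ j"
    by (simp add: power_mult_distrib)
qed simp

lemma pos_span_polar_moment:
  assumes "m = 2 * k + 1" "k \<le> n div 2" "1 \<le> a + b" "a + b \<le> n + 1"
  shows "pos_span (basis m n) (\<lambda>u. polar_radius m u ^ (a + b) * half_arc_moment a b (polar_angle m u))"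
proof (cases "odd (a + b)")
  case True
  then obtain \<kappa> where \<kappa>: "half_arc_moment a b = trig_form (a + b) \<kappa>"
    using half_arc_moment_odd by blast
  obtain D where D: "a + b = 2 * D + 1"
    using True by (metis oddE)
  have "pos_span (basis m n) (\<lambda>u. \<Sum>j\<le>a + b. \<kappa> j * u ^ (2 * (D + k * j) + 1))"
    using D assms
    by (intro pos_span_sum pos_span_scaled_member odd_power_in_basis) auto
  then show ?thesis
  proof (rule pos_span_cong)
    fix u :: real
    assume "0 < u"
    have "a + b - j + m * j = 2 * (D + k * j) + 1" if "j \<le> a + b" for j
      using that D assms(1) by (simp add: algebra_simps)
    then show "polar_radius m u ^ (a + b) * half_arc_moment a b (polar_angle m u)
        = (\<Sum>j\<le>a + b. \<kappa> j * u ^ (2 * (D + k * j) + 1))"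
      unfolding \<kappa> trig_form_polar polar_cos_sin[OF \<open>0 < u\<close>]
      by (intro sum.cong refl) (simp add: mult.assoc flip: power_mult power_add)
  qed
next
  case False
  then obtain e where e: "a + b = 2 * e"
    by (metis evenE)
  have "pos_span (basis m n) (\<lambda>u. half_arc_moment a b 0 * (u ^ 2 + u ^ (2 * m)) ^ e)"
    using e assms by (intro pos_span_scaled_member even_power_in_basis) auto
  then show ?thesis
    by (rule pos_span_cong)
       (use half_arc_moment_even[of a b] False in \<open>simp add: e polar_radius_power_even\<close>)
qed

lemma pos_span_half_circle_integral:
  assumes "m = 2 * k + 1" "k \<le> n div 2" "c = 0 \<or> c = pi"
  shows "pos_span (basis m n) (\<lambda>u. half_circle_integral n a b (polar_radius m u) (polar_angle m u + c))"
proof -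
  have moment: "pos_span (basis m n)
      (\<lambda>u. polar_radius m u ^ (i + j) * half_arc_moment i j (polar_angle m u + c))"
    if "1 \<le> i + j" "i + j \<le> n + 1" for i j
  proof -
    obtain \<sigma> where \<sigma>: "\<And>t. half_arc_moment i j (t + c) = \<sigma> * half_arc_moment i j t"
      using assms(3) half_arc_moment_add_pi by (metis add_0_right mult_1)
    show ?thesis
      using pos_span_lincomb[OF pos_span_polar_moment[OF assms(1,2) that]
          pos_span_polar_moment[OF assms(1,2) that], where x=\<sigma> and y=0]
      by (rule pos_span_cong) (simp add: \<sigma>)
  qed
  have "pos_span (basis m n) (\<lambda>u. \<Sum>i\<le>n. \<Sum>j\<le>n - i.
      b i j * (polar_radius m u ^ (i + Suc j) * half_arc_moment i (Suc j) (polar_angle m u + c))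
    + a i j * (polar_radius m u ^ (Suc i + j) * half_arc_moment (Suc i) j (polar_angle m u + c)))"
    by (intro pos_span_sum pos_span_lincomb moment) auto
  then show ?thesis
    by (rule pos_span_cong) (simp add: half_circle_integral_eq_moments algebra_simps)
qed

lemma melnikov_in_pos_span:
  assumes "m = 2 * k + 1" "k \<le> n div 2"
  shows "pos_span (basis m n) (\<lambda>u. melnikov m n ap bp am bm (u ^ 2 + u ^ (2 * m)))"
proof -
  have m: "1 \<le> m"
    using assms(1) by simp
  have "pos_span (basis m n) (\<lambda>u. 1 * half_circle_integral n ap bp (polar_radius m u) (polar_angle m u + pi)
      + 1 * half_circle_integral n am bm (polar_radius m u) (polar_angle m u + 0))"
    by (intro pos_span_lincomb pos_span_half_circle_integral[OF assms]) simp_all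
  then show ?thesis
    by (rule pos_span_cong) (simp add: melnikov_polar[OF _ m])
qed

section \<open>Every combination of the basis is a Melnikov function\<close>

definition melnikov_realizable :: "nat \<Rightarrow> nat \<Rightarrow> (real \<Rightarrow> real) \<Rightarrow> bool" where
  "melnikov_realizable m n f \<longleftrightarrow>
     (\<exists>ap bp am bm. \<forall>u>0. melnikov m n ap bp am bm (u ^ 2 + u ^ (2 * m)) = f u)"

lemma melnikov_realizable_lincomb:
  assumes "finite A" "\<And>a. a \<in> A \<Longrightarrow> melnikov_realizable m n (f a)"
  shows "melnikov_realizable m n (\<lambda>u. \<Sum>a\<in>A. c a * f a u)"
  using assms
proof (induction A rule: finite_induct)
  case empty
  have zero: "melnikov m n (\<lambda>i j. 0) (\<lambda>i j. 0) (\<lambda>i j. 0) (\<lambda>i j. 0) h = 0" for h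
    unfolding melnikov_def Let_def half_circle_integral_def[symmetric]
    by (simp add: half_circle_integral_eq_moments)
  show ?case
    unfolding melnikov_realizable_def by (intro exI[of _ "\<lambda>i j. 0"]) (simp add: zero)
next
  case (insert a A)
  obtain ap bp am bm where 1: "\<And>u. 0 < u \<Longrightarrow> melnikov m n ap bp am bm (u ^ 2 + u ^ (2 * m)) = f a u"
    using insert.prems unfolding melnikov_realizable_def by blast
  obtain ap' bp' am' bm' where 2:
    "\<And>u. 0 < u \<Longrightarrow> melnikov m n ap' bp' am' bm' (u ^ 2 + u ^ (2 * m)) = (\<Sum>a\<in>A. c a * f a u)"
    using insert.IH insert.prems unfolding melnikov_realizable_def by blast
  have "\<forall>u>0. melnikov m n (\<lambda>i j. c a * ap i j + 1 * ap' i j) (\<lambda>i j. c a * bp i j + 1 * bp' i j)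
      (\<lambda>i j. c a * am i j + 1 * am' i j) (\<lambda>i j. c a * bm i j + 1 * bm' i j) (u ^ 2 + u ^ (2 * m))
      = (\<Sum>a\<in>insert a A. c a * f a u)"
    unfolding melnikov_lincomb using insert.hyps by (simp add: 1 2)
  then show ?case
    unfolding melnikov_realizable_def by blast
qed

lemma melnikov_realizable_odd_power:
  assumes "m = 2 * k + 1" "D \<le> n div 2" "j \<le> 2 * D + 1"
  shows "melnikov_realizable m n (\<lambda>u. u ^ (2 * (D + k * j) + 1))"
proof -
  have m: "1 \<le> m"
    using assms(1) by simp
  define a where "a = 2 * D + 1 - j"
  have a: "a + j \<le> n + 1" "odd (a + j)" "a + m * j = 2 * (D + k * j) + 1"
    using assms unfolding a_def by (auto simp: algebra_simps)
  have zero: "half_circle_integral n (\<lambda>i j. 0) (\<lambda>i j. 0) r t = 0" for r t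
    by (simp add: half_circle_integral_eq_moments)
  have "melnikov m n (monomial_coeffs a (j - 1) (- real j / 2)) (monomial_coeffs (a - 1) j (real a / 2))
      (\<lambda>i j. 0) (\<lambda>i j. 0) (u ^ 2 + u ^ (2 * m)) = u ^ (2 * (D + k * j) + 1)" if "0 < u" for u
  proof -
    let ?r = "polar_radius m u" and ?\<alpha> = "polar_angle m u"
    have "melnikov m n (monomial_coeffs a (j - 1) (- real j / 2)) (monomial_coeffs (a - 1) j (real a / 2))
        (\<lambda>i j. 0) (\<lambda>i j. 0) (u ^ 2 + u ^ (2 * m))
      = ((?r * cos (?\<alpha> + pi - pi)) ^ a * (?r * sin (?\<alpha> + pi - pi)) ^ j
         - (?r * cos (?\<alpha> + pi)) ^ a * (?r * sin (?\<alpha> + pi)) ^ j) / 2"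
      unfolding melnikov_polar[OF that m] half_circle_integral_exact[OF a(1)] zero by simp
    also have "\<dots> = (u ^ a * (u ^ m) ^ j - (- u) ^ a * (- (u ^ m)) ^ j) / 2"
      using polar_cos_sin[OF that] by simp
    also have "\<dots> = u ^ a * (u ^ m) ^ j"
    proof -
      have "(- u) ^ a * (- (u ^ m)) ^ j = (- 1) ^ (a + j) * (u ^ a * (u ^ m) ^ j)"
        by (simp add: power_minus[of u] power_minus[of "u ^ m"] power_add)
      then show ?thesis
        using a(2) by simp
    qed
    also have "\<dots> = u ^ (2 * (D + k * j) + 1)"
      by (metis a(3) power_add power_mult)
    finally show ?thesis .
  qed
  then show ?thesis
    unfolding melnikov_realizable_def by blast
qed

lemma melnikov_realizable_even_power:
  assumes "1 \<le> m" "1 \<le> e" "2 * e \<le> n + 1"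
  shows "melnikov_realizable m n (\<lambda>u. (u ^ 2 + u ^ (2 * m)) ^ e)"
proof -
  define C where "C = half_arc_moment (2 * e) 0 0"
  have "C \<noteq> 0"
    unfolding C_def by (rule half_arc_moment_cos_even_nonzero)
  define am where "am = monomial_coeffs (2 * e - 1) 0 (1 / C)"
  have "half_circle_integral n am (\<lambda>i j. 0) r t = r ^ (2 * e)" for r t
  proof -
    have "half_circle_integral n am (\<lambda>i j. 0) r t = (\<Sum>i\<le>n. \<Sum>j\<le>n - i.
        if i = 2 * e - 1 \<and> j = 0 then r ^ (i + j + 1) * (1 / C * half_arc_moment (Suc i) j t) else 0)"
      unfolding half_circle_integral_eq_moments am_def monomial_coeffs_def by (intro sum.cong) auto
    also have "\<dots> = r ^ (2 * e - 1 + 0 + 1) * (1 / C * half_arc_moment (Suc (2 * e - 1)) 0 t)"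
      using assms by (intro triangle_sum_delta) auto
    also have "\<dots> = r ^ (2 * e)"
      using half_arc_moment_even[of "2 * e" 0 t] \<open>C \<noteq> 0\<close> assms(2) by (simp add: C_def)
    finally show ?thesis .
  qed
  moreover have "half_circle_integral n (\<lambda>i j. 0) (\<lambda>i j. 0) r t = 0" for r t
    by (simp add: half_circle_integral_eq_moments)
  ultimately have "melnikov m n (\<lambda>i j. 0) (\<lambda>i j. 0) am (\<lambda>i j. 0) (u ^ 2 + u ^ (2 * m))
      = (u ^ 2 + u ^ (2 * m)) ^ e" if "0 < u" for u
    using melnikov_polar[OF that assms(1)] by (simp add: polar_radius_power_even)
  then show ?thesis
    unfolding melnikov_realizable_def by blast
qed

lemma basis_lincomb_realizable:
  assumes "m = 2 * k + 1" "k \<le> n div 2"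
  shows "melnikov_realizable m n (\<lambda>u. \<Sum>i<length (basis m n). c i * (basis m n ! i) u)"
proof (rule melnikov_realizable_lincomb)
  fix i
  assume "i \<in> {..<length (basis m n)}"
  then have "basis m n ! i \<in> set (basis m n)"
    by simp
  then show "melnikov_realizable m n (basis m n ! i)"
  proof (rule basis_cases[OF assms])
    fix D j
    assume "D \<le> n div 2" "j \<le> 2 * D + 1" "basis m n ! i = (\<lambda>u. u ^ (2 * (D + k * j) + 1))"
    then show ?thesis
      using melnikov_realizable_odd_power[OF assms(1)] by simp
  next
    fix e
    assume "1 \<le> e" "2 * e \<le> n + 1" "basis m n ! i = (\<lambda>u. (u ^ 2 + u ^ (2 * m)) ^ e)"
    then show ?thesis
      using melnikov_realizable_even_power[of m e n] assms(1) by simp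
  qed
qed simp

section \<open>Linear independence and the number of basis functions\<close>

lemma coeff_below_order_0: "p \<noteq> 0 \<Longrightarrow> i < order 0 p \<Longrightarrow> coeff p i = 0"
  using monom_1_dvd_iff[of p "order 0 p"] monom_1_dvd_iff'[of "order 0 p" p] by auto

lemma coeff_order_0_nonzero:
  assumes "p \<noteq> 0"
  shows "coeff p (order 0 p) \<noteq> 0"
proof
  assume "coeff p (order 0 p) = 0"
  then have "\<forall>i<Suc (order 0 p). coeff p i = 0"
    using coeff_below_order_0[OF assms] less_Suc_eq by auto
  then show False
    using monom_1_dvd_iff[OF assms, of "Suc (order 0 p)"] monom_1_dvd_iff' by auto
qed

text \<open>The lowest order term of a nontrivial combination cannot cancel.\<close>

lemma poly_lincomb_eq_0_distinct_order:
  fixes ps :: "real poly list"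
  assumes "distinct (map (order 0) ps)" "0 \<notin> set ps"
    and "\<And>u. 0 < u \<Longrightarrow> (\<Sum>i<length ps. c i * poly (ps ! i) u) = 0"
  shows "\<forall>i<length ps. c i = 0"
proof (rule ccontr)
  define Q where "Q = (\<Sum>i<length ps. smult (c i) (ps ! i))"
  have "{0<..} \<subseteq> {u. poly Q u = 0}"
    using assms(3) by (auto simp: Q_def poly_sum)
  then have "Q = 0"
    using poly_roots_finite infinite_Ioi finite_subset by blast
  define S where "S = {i. i < length ps \<and> c i \<noteq> 0}"
  define i0 where "i0 = arg_min_on (\<lambda>i. order 0 (ps ! i)) S"
  assume "\<not> (\<forall>i<length ps. c i = 0)"
  then have "S \<noteq> {}" "finite S"
    unfolding S_def by auto
  then have i0: "i0 \<in> S" "\<And>i. i \<in> S \<Longrightarrow> order 0 (ps ! i0) \<le> order 0 (ps ! i)"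
    unfolding i0_def by (auto dest: arg_min_if_finite simp: not_less[symmetric])
  have nonzero: "ps ! i \<noteq> 0" if "i < length ps" for i
    using assms(2) nth_mem[OF that] by auto
  have "coeff (ps ! i) (order 0 (ps ! i0)) = 0" if "i \<in> S" "i \<noteq> i0" for i
  proof -
    have "order 0 (ps ! i) \<noteq> order 0 (ps ! i0)"
      using assms(1) that i0(1) unfolding S_def by (auto simp: distinct_conv_nth)
    then show ?thesis
      using i0(2)[OF that(1)] that(1) nonzero unfolding S_def
      by (intro coeff_below_order_0) auto
  qed
  then have "coeff Q (order 0 (ps ! i0)) = (\<Sum>i<length ps. if i = i0 then c i0 * coeff (ps ! i0) (order 0 (ps ! i0)) else 0)"
    unfolding Q_def coeff_sum coeff_smult S_def by (intro sum.cong) auto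
  also have "\<dots> \<noteq> 0"
    using i0(1) nonzero coeff_order_0_nonzero[of "ps ! i0"] unfolding S_def by auto
  finally show False
    using \<open>Q = 0\<close> by simp
qed

lemma order_0_monom_mult:
  fixes p :: "'a::idom poly"
  assumes "poly p 0 \<noteq> 0"
  shows "order 0 (monom 1 a * p) = a"
proof -
  have "p \<noteq> 0"
    using assms by auto
  then have "order 0 (monom 1 a * p) = order 0 (monom (1::'a) a) + order 0 p"
    by (intro order_mult) simp
  then show ?thesis
    using order_0I[OF assms] by simp
qed

lemma basis_eq_map_poly:
  assumes "m = 2 * k + 1" "k \<le> n div 2"
  obtains ps where "basis m n = map poly ps" "0 \<notin> set ps" "distinct (map (order 0) ps)"
proof -
  define q :: "real poly" where "q = 1 + monom 1 (2 * m - 2)"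
  define ps where "ps = map (\<lambda>v. monom 1 (2 * v + 1)) (odd_exponents k (n div 2))
      @ map (\<lambda>l. monom 1 (2 * (l + 1)) * q ^ (l + 1)) [0..<(n + 1) div 2]"
  have q: "poly (q ^ e) 0 \<noteq> 0" for e
    unfolding q_def poly_power by (simp add: poly_monom power_0_left)
  have eq: "u ^ 2 + u ^ (2 * m) = u ^ 2 * poly q u" for u :: real
    using assms(1) by (simp add: q_def poly_monom algebra_simps flip: power_add)
  have "(u ^ 2 + u ^ (2 * m)) ^ (l + 1) = poly (monom 1 (2 * (l + 1)) * q ^ (l + 1)) u" for u :: real and l
    unfolding eq by (simp only: poly_mult poly_monom poly_power mult_1 power_mult power_mult_distrib)
  moreover have "u ^ (2 * v + 1) = poly (monom 1 (2 * v + 1)) u" for u :: real and v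
    by (simp add: poly_monom)
  ultimately have "basis m n = map poly ps"
    unfolding basis_split[OF assms] ps_def by (simp add: fun_eq_iff)
  moreover have "0 \<notin> set ps"
    using q unfolding ps_def by auto
  moreover have "map (order 0) ps = map (\<lambda>v. 2 * v + 1) (odd_exponents k (n div 2))
      @ map (\<lambda>l. 2 * (l + 1)) [0..<(n + 1) div 2]"
    unfolding ps_def map_append map_map comp_def order_0_monom_mult[OF q] by simp
  then have "distinct (map (order 0) ps)"
    using distinct_odd_exponents by (auto simp: distinct_map inj_on_def) presburger
  ultimately show ?thesis
    using that by blast
qed

lemma basis_lincomb_eq_0:
  assumes "m = 2 * k + 1" "k \<le> n div 2"
    and "\<And>u. 0 < u \<Longrightarrow> (\<Sum>i<length (basis m n). c i * (basis m n ! i) u) = 0"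
  shows "\<forall>i<length (basis m n). c i = 0"
proof -
  obtain ps where "basis m n = map poly ps" "0 \<notin> set ps" "distinct (map (order 0) ps)"
    using basis_eq_map_poly[OF assms(1,2)] .
  then show ?thesis
    using poly_lincomb_eq_0_distinct_order[of ps c] assms(3) by simp
qed

lemma floor_half_pred:
  "real_of_int \<lfloor>(real n - 1) / 2\<rfloor> = real ((n + 1) div 2) - 1"
proof (cases "even n")
  case True
  then have x: "(real n - 1) / 2 = real (n div 2) - 1 / 2" and d: "(n + 1) div 2 = n div 2"
    by (auto simp: field_simps elim!: evenE)
  have "\<lfloor>real (n div 2) - 1 / 2\<rfloor> = int (n div 2) - 1"
    by (simp add: floor_eq_iff)
  then show ?thesis
    unfolding x d by simp
next
  case False
  then have x: "(real n - 1) / 2 = real (n div 2)" and d: "(n + 1) div 2 = n div 2 + 1"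
    by (auto simp: field_simps elim!: oddE)
  show ?thesis
    unfolding x d by simp
qed

lemma length_basis:
  assumes "m = 2 * k + 1" "k \<le> n div 2"
  shows "real (length (basis m n))
           = real_of_int \<lfloor>(real n - 1) / 2\<rfloor> + real_of_int \<lfloor>real n / 2\<rfloor> * real m
             - real m ^ 2 / 4 + 3 / 2 * real m + 3 / 4"
proof -
  define N where "N = n div 2"
  have "length (basis m n) = zexp_nat k N + 1 + (k - 1) * k + (n + 1) div 2"
    unfolding basis_split[OF assms] N_def by (simp add: length_odd_exponents)
  moreover have "real (zexp_nat k N) = real N + real k * (2 * (real N - real k) + 3)"
    using assms(2) unfolding zexp_nat_def N_def by (simp add: of_nat_diff)
  moreover have "real ((k - 1) * k) = (real k - 1) * real k"
    by (cases k) (simp_all add: algebra_simps)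
  moreover have "\<lfloor>real n / 2\<rfloor> = int N"
    unfolding N_def by linarith
  ultimately show ?thesis
    using assms(1) by (simp add: floor_half_pred field_simps power2_eq_square)
qed

theorem lemma3p7:
  fixes m n k :: nat
  assumes "m = 2 * k + 1" and "n \<ge> m - 1"
  shows "(\<forall>ap bp am bm. \<exists>c :: nat \<Rightarrow> real. \<forall>u :: real. u > 0 \<longrightarrow>
            melnikov m n ap bp am bm (u ^ 2 + u ^ (2 * m))
              = (\<Sum>i<length (basis m n). c i * (basis m n ! i) u))
       \<and> (\<forall>c :: nat \<Rightarrow> real. \<exists>ap bp am bm. \<forall>u :: real. u > 0 \<longrightarrow>
            melnikov m n ap bp am bm (u ^ 2 + u ^ (2 * m))
              = (\<Sum>i<length (basis m n). c i * (basis m n ! i) u))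
       \<and> (\<forall>c :: nat \<Rightarrow> real.
            (\<forall>u :: real. u > 0 \<longrightarrow> (\<Sum>i<length (basis m n). c i * (basis m n ! i) u) = 0)
            \<longrightarrow> (\<forall>i<length (basis m n). c i = 0))
       \<and> real (length (basis m n))
           = real_of_int \<lfloor>(real n - 1) / 2\<rfloor> + real_of_int \<lfloor>real n / 2\<rfloor> * real m
             - real m ^ 2 / 4 + 3 / 2 * real m + 3 / 4"
proof -
  have k: "k \<le> n div 2"
    using assms by simp
  show ?thesis
    using melnikov_in_pos_span[OF assms(1) k] basis_lincomb_realizable[OF assms(1) k]
      basis_lincomb_eq_0[OF assms(1) k] length_basis[OF assms(1) k]
    unfolding pos_span_def melnikov_realizable_def by blast
qed

end
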